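(* Let $K$ be an algebraically closed field, $Q$ a quiver with vertex set $I$, $v\in I$ and $\lambda\in K^I$. Let $Q_\infty$ be the quiver obtained from $Q$ by adjoining a new vertex $\infty$ and a new arrow $a\colon\infty\to v$, and extend $\lambda$ to $K^{I\cup\{\infty\}}$ by $\lambda_\infty=0$. Let $S(\infty)$ be the simple $\Pi^\lambda Q_\infty$-module which is one-dimensional at $\infty$ and zero at all other vertices, and let $\mathcal C$ be the category of $\Pi^\lambda Q_\infty$-modules $X$ with $\operatorname{Hom}(X,S(\infty))=\operatorname{Hom}(S(\infty),X)=0$. Then the forgetful functor from representations of $\overline{Q_\infty}$ to representations of $\bar Q$ (forgetting the vertex $\infty$ and the arrows $a,a^*$) induces an equivalence from the full subcategory of finite-dimensional $X\in\mathcal C$ with $\dim X_\infty\le 1$ to the category of nearly representations of $\Pi^\lambda Q$ with respect to $v$.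
   Context: For a quiver $Q$ with vertex set $I$, each arrow $a$ has tail $t(a)$ and head $h(a)$. The double $\bar Q$ is obtained by adjoining an arrow $a^*\colon h(a)\to t(a)$ for each arrow $a$ of $Q$. For $\lambda\in K^I$ and a finite-dimensional representation $X$ of $\bar Q$ define, for each $i\in I$, $$X_{c,i}=\sum_{a\in Q,\,h(a)=i}X_aX_{a^*}-\sum_{a\in Q,\,t(a)=i}X_{a^*}X_a-\lambda_i 1_{X_i}.$$ The deformed preprojective algebra $\Pi^\lambda Q$ is $K\bar Q$ modulo the relation $\sum_{a\in Q}(aa^*-a^*a)-\sum_i\lambda_ie_i$; its modules are the representations $X$ of $\bar Q$ with $X_{c,i}=0$ for all $i$. Write $\lambda\cdot\alpha=\sum_i\lambda_i\alpha_i$. A nearly representation of $\Pi^\lambda Q$ (with respect to $v$) is a finite-dimensional representation $X$ of $\bar Q$ with $\lambda\cdot\underline{\dim}\,X=0$, $X_{c,i}=0$ for all $i\ne v$, and $\operatorname{rank}(X_{c,v})\le 1$; morphisms of nearly representations are morphisms of $\bar Q$-representations. *)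

theory Defs
  imports "Jordan_Normal_Form.DL_Rank" "HOL-Computational_Algebra.Polynomial"
begin

definition alg_closed :: "'k::field itself \<Rightarrow> bool" where
  "alg_closed _ \<longleftrightarrow> (\<forall>p :: 'k poly. degree p > 0 \<longrightarrow> (\<exists>x. poly p x = 0))"

text \<open>A quiver is given by a finite vertex type 'v, a finite arrow type 'e and
  tail / head maps ta, ha :: 'e => 'v.
  A finite-dimensional representation of the double quiver (over a field 'k),
  with chosen bases, is a pair (d, M): d i is the dimension at vertex i and
  M a False is the matrix of the arrow a : ta a -> ha a, M a True the matrix of
  the adjoined arrow a* : ha a -> ta a.\<close>

type_synonym ('v, 'e, 'k) rep = "('v \<Rightarrow> nat) \<times> ('e \<Rightarrow> bool \<Rightarrow> 'k mat)"

definition is_rep :: "('e \<Rightarrow> 'v) \<Rightarrow> ('e \<Rightarrow> 'v) \<Rightarrow> ('v, 'e, 'k) rep \<Rightarrow> bool" where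
  "is_rep ta ha X \<longleftrightarrow>
     (\<forall>a. snd X a False \<in> carrier_mat (fst X (ha a)) (fst X (ta a))
        \<and> snd X a True \<in> carrier_mat (fst X (ta a)) (fst X (ha a)))"

definition Xc :: "('e::finite \<Rightarrow> 'v) \<Rightarrow> ('e \<Rightarrow> 'v) \<Rightarrow> ('v \<Rightarrow> 'k::field) \<Rightarrow> ('v, 'e, 'k) rep \<Rightarrow> 'v \<Rightarrow> 'k mat" where
  "Xc ta ha lam X i =
     mat (fst X i) (fst X i) (\<lambda>(p, q).
        (\<Sum>a\<in>{a. ha a = i}. (snd X a False * snd X a True) $$ (p, q))
      - (\<Sum>a\<in>{a. ta a = i}. (snd X a True * snd X a False) $$ (p, q))
      - (if p = q then lam i else 0))"

definition is_hom :: "('e \<Rightarrow> 'v) \<Rightarrow> ('e \<Rightarrow> 'v) \<Rightarrow> ('v, 'e, 'k::field) rep \<Rightarrow> ('v, 'e, 'k) rep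
    \<Rightarrow> ('v \<Rightarrow> 'k mat) \<Rightarrow> bool" where
  "is_hom ta ha X Y f \<longleftrightarrow>
     (\<forall>i. f i \<in> carrier_mat (fst Y i) (fst X i))
   \<and> (\<forall>a. f (ha a) * snd X a False = snd Y a False * f (ta a)
        \<and> f (ta a) * snd X a True = snd Y a True * f (ha a))"

definition zero_hom :: "('v, 'e, 'k::field) rep \<Rightarrow> ('v, 'e, 'k) rep \<Rightarrow> ('v \<Rightarrow> 'k mat)" where
  "zero_hom X Y = (\<lambda>i. 0\<^sub>m (fst Y i) (fst X i))"

definition rep_iso :: "('e \<Rightarrow> 'v) \<Rightarrow> ('e \<Rightarrow> 'v) \<Rightarrow> ('v, 'e, 'k::field) rep \<Rightarrow> ('v, 'e, 'k) rep \<Rightarrow> bool" where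
  "rep_iso ta ha X Y \<longleftrightarrow> (\<exists>f g. is_hom ta ha X Y f \<and> is_hom ta ha Y X g
      \<and> (\<forall>i. g i * f i = 1\<^sub>m (fst X i) \<and> f i * g i = 1\<^sub>m (fst Y i)))"

definition is_Pi_module :: "('e::finite \<Rightarrow> 'v) \<Rightarrow> ('e \<Rightarrow> 'v) \<Rightarrow> ('v \<Rightarrow> 'k::field) \<Rightarrow> ('v, 'e, 'k) rep \<Rightarrow> bool" where
  "is_Pi_module ta ha lam X \<longleftrightarrow> is_rep ta ha X \<and> (\<forall>i. Xc ta ha lam X i = 0\<^sub>m (fst X i) (fst X i))"

definition is_nearly :: "('e::finite \<Rightarrow> 'v::finite) \<Rightarrow> ('e \<Rightarrow> 'v) \<Rightarrow> ('v \<Rightarrow> 'k::field) \<Rightarrow> 'v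
    \<Rightarrow> ('v, 'e, 'k) rep \<Rightarrow> bool" where
  "is_nearly ta ha lam v X \<longleftrightarrow> is_rep ta ha X
     \<and> (\<Sum>i\<in>UNIV. lam i * of_nat (fst X i)) = 0
     \<and> (\<forall>i. i \<noteq> v \<longrightarrow> Xc ta ha lam X i = 0\<^sub>m (fst X i) (fst X i))
     \<and> vec_space.rank (fst X v) (Xc ta ha lam X v) \<le> 1"

text \<open>The quiver Q_infinity: vertices 'v option (None = infinity), arrows 'e option
  (None = the new arrow a : infinity -> v); lambda extended by 0 at infinity.\<close>
definition tl_inf :: "('e \<Rightarrow> 'v) \<Rightarrow> 'e option \<Rightarrow> 'v option" where
  "tl_inf ta a = (case a of None \<Rightarrow> None | Some b \<Rightarrow> Some (ta b))"

definition hd_inf :: "('e \<Rightarrow> 'v) \<Rightarrow> 'v \<Rightarrow> 'e option \<Rightarrow> 'v option" where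
  "hd_inf ha v a = (case a of None \<Rightarrow> Some v | Some b \<Rightarrow> Some (ha b))"

definition lam_inf :: "('v \<Rightarrow> 'k::zero) \<Rightarrow> 'v option \<Rightarrow> 'k" where
  "lam_inf lam i = (case i of None \<Rightarrow> 0 | Some j \<Rightarrow> lam j)"

definition S_dim :: "'v option \<Rightarrow> nat" where
  "S_dim i = (if i = None then 1 else 0)"

definition S_inf :: "('e \<Rightarrow> 'v) \<Rightarrow> ('e \<Rightarrow> 'v) \<Rightarrow> 'v \<Rightarrow> ('v option, 'e option, 'k::field) rep" where
  "S_inf ta ha v = (S_dim, (\<lambda>a b. if b then 0\<^sub>m (S_dim (tl_inf ta a)) (S_dim (hd_inf ha v a))
                                else 0\<^sub>m (S_dim (hd_inf ha v a)) (S_dim (tl_inf ta a))))"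

definition C_obj :: "('e::finite \<Rightarrow> 'v) \<Rightarrow> ('e \<Rightarrow> 'v) \<Rightarrow> ('v \<Rightarrow> 'k::field) \<Rightarrow> 'v
    \<Rightarrow> ('v option, 'e option, 'k) rep \<Rightarrow> bool" where
  "C_obj ta ha lam v X \<longleftrightarrow>
     is_Pi_module (tl_inf ta) (hd_inf ha v) (lam_inf lam) X
   \<and> (\<forall>f. is_hom (tl_inf ta) (hd_inf ha v) X (S_inf ta ha v) f \<longrightarrow> f = zero_hom X (S_inf ta ha v))
   \<and> (\<forall>f. is_hom (tl_inf ta) (hd_inf ha v) (S_inf ta ha v) X f \<longrightarrow> f = zero_hom (S_inf ta ha v) X)
   \<and> fst X None \<le> 1"

definition forget :: "('v option, 'e option, 'k) rep \<Rightarrow> ('v, 'e, 'k) rep" where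
  "forget X = (fst X \<circ> Some, \<lambda>a b. snd X (Some a) b)"

definition forget_hom :: "('v option \<Rightarrow> 'k mat) \<Rightarrow> ('v \<Rightarrow> 'k mat)" where
  "forget_hom f = f \<circ> Some"

end

theory Submission
  imports Defs
begin

text \<open>
  Write a representation X of the double of Q_infinity as its restriction Y = forget X together with
  the matrices of a : infinity -> v and a* : v -> infinity. The relations of Pi^lambda Q_infinity say
  exactly that Y satisfies the relations of Pi^lambda Q away from v, that Y_{c,v} = - a a*, and that
  a* a = 0. When dim X_infinity <= 1, the product a a* factors through a space of dimension at most
  one, so Y_{c,v} has rank at most one; the dimension condition is the vanishing of
  tr Y_{c,v} = - tr (a* a), since the traces of all Y_{c,i} add up to - lambda . dim Y. Conversely a
  rank-one factorisation of Y_{c,v} supplies a and a*, and then a* a, being at most 1 x 1, vanishes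
  because its trace does. Hom(X, S(infinity)) = 0 and Hom(S(infinity), X) = 0 say that a* and a
  are nonzero when X_infinity is one-dimensional. This makes the component of a morphism at infinity
  unique, and lets one construct it: a morphism g of the restrictions intertwines the
  endomorphisms Y_{c,v}, so (g_v a_X) a*_X = a_Y (a*_Y g_v), and an identity u x = y w between
  products through dimension at most one, with x and y nonzero, yields c with u = y c and c x = w.
\<close>

section \<open>Matrices\<close>

lemma index_mult_mat_sum:
  assumes "A \<in> carrier_mat nr n" "B \<in> carrier_mat n nc" "i < nr" "j < nc"
  shows "(A * B) $$ (i, j) = (\<Sum>k<n. A $$ (i, k) * B $$ (k, j))"
  using assms by (auto simp: scalar_prod_def atLeast0LessThan intro!: sum.cong)

definition mat_trace :: "'a::comm_monoid_add mat \<Rightarrow> 'a" where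
  "mat_trace A = (\<Sum>i<dim_row A. A $$ (i, i))"

lemma mat_trace_mult_comm:
  fixes A B :: "'a::comm_semiring_0 mat"
  assumes "A \<in> carrier_mat n m" "B \<in> carrier_mat m n"
  shows "mat_trace (A * B) = mat_trace (B * A)"
proof -
  have "mat_trace (A * B) = (\<Sum>i<n. \<Sum>k<m. A $$ (i, k) * B $$ (k, i))"
    using assms unfolding mat_trace_def by (intro sum.cong) (auto simp del: index_mult_mat(1) simp: index_mult_mat_sum)
  also have "\<dots> = (\<Sum>k<m. \<Sum>i<n. B $$ (k, i) * A $$ (i, k))"
    by (subst sum.swap) (simp add: mult.commute)
  also have "\<dots> = mat_trace (B * A)"
    using assms unfolding mat_trace_def by (intro sum.cong) (auto simp del: index_mult_mat(1) simp: index_mult_mat_sum)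
  finally show ?thesis .
qed

lemma mat_trace_uminus:
  "A \<in> carrier_mat n n \<Longrightarrow> mat_trace (- A) = - mat_trace (A :: 'a::ab_group_add mat)"
  by (simp add: mat_trace_def sum_negf[symmetric])

lemma mat_trace_smult_one: "mat_trace (k \<cdot>\<^sub>m 1\<^sub>m n) = (k :: 'a::comm_semiring_1) * of_nat n"
  by (simp add: mat_trace_def mult.commute)

lemma mat_trace_zero [simp]: "mat_trace (0\<^sub>m n n) = 0"
  by (simp add: mat_trace_def)

lemma square_mat_le_1_eq_0_iff_trace:
  assumes "A \<in> carrier_mat n n" "n \<le> 1"
  shows "A = 0\<^sub>m n n \<longleftrightarrow> mat_trace A = 0"
proof
  assume "mat_trace A = 0"
  then show "A = 0\<^sub>m n n"
    using assms by (intro eq_matI) (auto simp: mat_trace_def le_Suc_eq)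
qed simp

lemma add_eq_0_iff_eq_uminus_mat:
  fixes A B :: "'a::group_add mat"
  assumes "A \<in> carrier_mat n m" "B \<in> carrier_mat n m"
  shows "A + B = 0\<^sub>m n m \<longleftrightarrow> A = - B"
  using assms by (auto simp: mat_eq_iff eq_neg_iff_add_eq_0)

lemma uminus_eq_0_iff_mat:
  fixes A :: "'a::group_add mat"
  assumes "A \<in> carrier_mat n m"
  shows "- A = 0\<^sub>m n m \<longleftrightarrow> A = 0\<^sub>m n m"
  using assms by (auto simp: mat_eq_iff)

lemma mult_minus_minus_distrib_mat:
  fixes F :: "'a::ring mat"
  assumes "F \<in> carrier_mat nr n" "A \<in> carrier_mat n nc" "B \<in> carrier_mat n nc" "C \<in> carrier_mat n nc"
  shows "F * (A - B - C) = F * A - F * B - F * C"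
  using mult_minus_distrib_mat[OF assms(1) minus_carrier_mat[OF assms(3)] assms(4)]
    mult_minus_distrib_mat[OF assms(1-3)] by simp

lemma minus_minus_mult_distrib_mat:
  fixes F :: "'a::ring mat"
  assumes "A \<in> carrier_mat nr n" "B \<in> carrier_mat nr n" "C \<in> carrier_mat nr n" "F \<in> carrier_mat n nc"
  shows "(A - B - C) * F = A * F - B * F - C * F"
  using minus_mult_distrib_mat[OF minus_carrier_mat[OF assms(2)] assms(3,4)]
    minus_mult_distrib_mat[OF assms(1,2,4)] by simp

definition mat_sum :: "nat \<Rightarrow> nat \<Rightarrow> 'i set \<Rightarrow> ('i \<Rightarrow> 'a::comm_monoid_add mat) \<Rightarrow> 'a mat" where
  "mat_sum nr nc S F = mat nr nc (\<lambda>ij. \<Sum>a\<in>S. F a $$ ij)"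

lemma mat_sum_dim [simp]:
  "dim_row (mat_sum nr nc S F) = nr" "dim_col (mat_sum nr nc S F) = nc"
  by (simp_all add: mat_sum_def)


lemma mat_sum_cong: "(\<And>a. a \<in> S \<Longrightarrow> F a = G a) \<Longrightarrow> mat_sum nr nc S F = mat_sum nr nc S G"
  by (simp add: mat_sum_def)

lemma mult_mat_sum:
  fixes A :: "'a::comm_semiring_0 mat"
  assumes "A \<in> carrier_mat nr n" "\<And>a. a \<in> S \<Longrightarrow> F a \<in> carrier_mat n nc"
  shows "A * mat_sum n nc S F = mat_sum nr nc S (\<lambda>a. A * F a)"
proof (intro eq_matI)
  fix i j assume "i < dim_row (mat_sum nr nc S (\<lambda>a. A * F a))" "j < dim_col (mat_sum nr nc S (\<lambda>a. A * F a))"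
  with assms show "(A * mat_sum n nc S F) $$ (i, j) = mat_sum nr nc S (\<lambda>a. A * F a) $$ (i, j)"
    by (simp del: index_mult_mat(1) add: mat_sum_def index_mult_mat_sum[of _ nr n _ nc] sum_distrib_left sum.swap[of _ S])
qed (use assms in auto)

lemma mat_sum_mult:
  fixes B :: "'a::comm_semiring_0 mat"
  assumes "\<And>a. a \<in> S \<Longrightarrow> F a \<in> carrier_mat nr n" "B \<in> carrier_mat n nc"
  shows "mat_sum nr n S F * B = mat_sum nr nc S (\<lambda>a. F a * B)"
proof (intro eq_matI)
  fix i j assume "i < dim_row (mat_sum nr nc S (\<lambda>a. F a * B))" "j < dim_col (mat_sum nr nc S (\<lambda>a. F a * B))"
  with assms show "(mat_sum nr n S F * B) $$ (i, j) = mat_sum nr nc S (\<lambda>a. F a * B) $$ (i, j)"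
    by (simp del: index_mult_mat(1) add: mat_sum_def index_mult_mat_sum[of _ nr n _ nc] sum_distrib_right sum.swap[of _ S])
qed (use assms in auto)

lemma mat_sum_intertwine:
  fixes G :: "'a::comm_semiring_0 mat"
  assumes "G \<in> carrier_mat m n"
    and "\<And>a. a \<in> S \<Longrightarrow> P a \<in> carrier_mat n n" "\<And>a. a \<in> S \<Longrightarrow> P' a \<in> carrier_mat m m"
    and "\<And>a. a \<in> S \<Longrightarrow> G * P a = P' a * G"
  shows "G * mat_sum n n S P = mat_sum m m S P' * G"
proof -
  have "G * mat_sum n n S P = mat_sum m n S (\<lambda>a. G * P a)"
    using assms(1,2) by (rule mult_mat_sum)
  also have "\<dots> = mat_sum m n S (\<lambda>a. P' a * G)"
    using assms(4) by (rule mat_sum_cong)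
  also have "\<dots> = mat_sum m m S P' * G"
    using assms(3,1) by (rule mat_sum_mult[symmetric])
  finally show ?thesis .
qed

lemma mult_intertwine:
  assumes "F \<in> carrier_mat m' m" "G \<in> carrier_mat n' n"
    and "A \<in> carrier_mat m n" "A' \<in> carrier_mat m' n'" "B \<in> carrier_mat n m" "B' \<in> carrier_mat n' m'"
    and "F * A = A' * G" "G * B = B' * F"
  shows "F * (A * B) = (A' * B') * F"
proof -
  have "F * (A * B) = (A' * G) * B"
    using assms by (metis assoc_mult_mat)
  also have "\<dots> = A' * (B' * F)"
    using assms by (metis assoc_mult_mat)
  also have "\<dots> = (A' * B') * F"
    using assms by (metis assoc_mult_mat)
  finally show ?thesis .
qed

lemma mat_trace_mat_sum:
  assumes "\<And>a. a \<in> S \<Longrightarrow> F a \<in> carrier_mat n n"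
  shows "mat_trace (mat_sum n n S F) = (\<Sum>a\<in>S. mat_trace (F a))"
  using assms unfolding mat_trace_def mat_sum_def
  by (simp add: sum.swap[of _ S]) (intro sum.cong; auto)

lemma det2_nonzero_imp_trivial_solution:
  fixes a b c d x y :: "'a::field"
  assumes "a * d \<noteq> b * c" "x * a + y * b = 0" "x * c + y * d = 0"
  shows "x = 0 \<and> y = 0"
proof -
  have "x * (a * d - b * c) = d * (x * a + y * b) - b * (x * c + y * d)"
    and "y * (a * d - b * c) = a * (x * c + y * d) - c * (x * a + y * b)"
    by (simp_all add: algebra_simps)
  then have "x * (a * d - b * c) = 0" "y * (a * d - b * c) = 0"
    using assms(2,3) by simp_all
  then show ?thesis using assms(1) by simp
qed

lemma (in vec_space) rank_le_1_minors_vanish: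
  assumes A: "A \<in> carrier_mat n nc" and rk: "rank A \<le> 1"
    and ij: "i < n" "i' < n" "j < nc" "j' < nc"
  shows "A $$ (i, j) * A $$ (i', j') = A $$ (i, j') * A $$ (i', j)"
proof (rule ccontr)
  assume det: "A $$ (i, j) * A $$ (i', j') \<noteq> A $$ (i, j') * A $$ (i', j)"
  define u w where "u = col A j" and "w = col A j'"
  have uw: "u \<in> carrier_vec n" "w \<in> carrier_vec n" "u $ k = A $$ (k, j)" "w $ k = A $$ (k, j')"
    if "k < n" for k
    using A ij that by (auto simp: u_def w_def)
  have "u \<noteq> w"
    using det uw ij by (metis mult.commute)
  have "lin_indpt {u, w}"
  proof (rule finite_lin_indpt2)
    show "{u, w} \<subseteq> carrier_vec n" using uw ij by auto
  next
    fix a assume "lincomb a {u, w} = 0\<^sub>v n"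
    then have "a u * A $$ (k, j) + a w * A $$ (k, j') = 0" if "k < n" for k
    proof -
      have "lincomb a {u, w} $ k = a u * u $ k + a w * w $ k"
        using lincomb_index[OF that, of "{u, w}" a] uw[OF that] \<open>u \<noteq> w\<close> by simp
      with \<open>lincomb a {u, w} = 0\<^sub>v n\<close> uw[OF that] that show ?thesis by simp
    qed
    from this[OF ij(1)] this[OF ij(2)] have "a u = 0 \<and> a w = 0"
      by (intro det2_nonzero_imp_trivial_solution[OF det])
    then show "\<forall>x\<in>{u, w}. a x = 0" by simp
  qed simp
  moreover have "{u, w} \<subseteq> set (cols A)"
    using A ij by (auto simp: u_def w_def cols_def)
  ultimately have "card {u, w} \<le> rank A"
    using rank_ge_card_indpt[OF A] by blast
  with rk \<open>u \<noteq> w\<close> show False by simp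
qed

lemma mult_mat_inner_le_1_index:
  assumes "A \<in> carrier_mat nr d" "B \<in> carrier_mat d nc" "d \<le> 1" "i < nr" "j < nc"
  shows "(A * B) $$ (i, j) = (if d = 0 then 0 else A $$ (i, 0) * B $$ (0, j))"
  using assms by (auto simp del: index_mult_mat(1) simp: index_mult_mat_sum le_Suc_eq)

lemma (in vec_space) rank_mult_inner_le_1:
  assumes "A \<in> carrier_mat n d" "B \<in> carrier_mat d nc" "d \<le> 1"
  shows "rank (A * B) \<le> 1"
  by (rule rank_le_1_product_entries[of _ nc "\<lambda>i. if d = 0 then 0 else A $$ (i, 0)" "\<lambda>j. B $$ (0, j)"])
    (use assms in \<open>auto simp del: index_mult_mat(1) simp: mult_mat_inner_le_1_index\<close>)

lemma (in vec_space) rank_le_1_factorization: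
  assumes M: "M \<in> carrier_mat n nc" and rk: "rank M \<le> 1"
  obtains d A B where "d \<le> 1" "A \<in> carrier_mat n d" "B \<in> carrier_mat d nc" "M = A * B"
    and "d = 1 \<Longrightarrow> \<exists>i<n. A $$ (i, 0) \<noteq> 0" and "d = 1 \<Longrightarrow> \<exists>j<nc. B $$ (0, j) \<noteq> 0"
proof (cases "M = 0\<^sub>m n nc")
  case True
  have "M = 0\<^sub>m n 0 * 0\<^sub>m 0 nc"
    using True by (intro eq_matI) auto
  with that[of 0 "0\<^sub>m n 0" "0\<^sub>m 0 nc"] show ?thesis by simp
next
  case False
  then obtain i0 j0 where ij0: "i0 < n" "j0 < nc" "M $$ (i0, j0) \<noteq> 0"
    using M by (metis (no_types, lifting) carrier_matD eq_matI index_zero_mat(1,2,3))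
  define A where "A = mat n 1 (\<lambda>(i, _). M $$ (i, j0))"
  define B where "B = mat 1 nc (\<lambda>(_, j). M $$ (i0, j) / M $$ (i0, j0))"
  have "M = A * B"
  proof (rule eq_matI)
    fix i j assume "i < dim_row (A * B)" "j < dim_col (A * B)"
    then have "i < n" "j < nc" by (auto simp: A_def B_def)
    moreover have "A \<in> carrier_mat n 1" "B \<in> carrier_mat 1 nc"
      by (simp_all add: A_def B_def)
    ultimately have "(A * B) $$ (i, j) = M $$ (i, j0) * M $$ (i0, j) / M $$ (i0, j0)"
      using mult_mat_inner_le_1_index[of A n 1 B nc i j] by (simp add: A_def B_def)
    then show "M $$ (i, j) = (A * B) $$ (i, j)"
      using rank_le_1_minors_vanish[OF M rk \<open>i < n\<close> ij0(1) \<open>j < nc\<close> ij0(2)] ij0(3)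
      by (simp add: field_simps) (metis mult_left_cancel)
  qed (use M in \<open>auto simp: A_def B_def\<close>)
  show ?thesis
    by (rule that[of 1 A B]) (use \<open>M = A * B\<close> ij0 in \<open>auto simp: A_def B_def\<close>)
qed

lemma mult_left_cancel_inner_le_1:
  fixes y :: "'a::field mat"
  assumes y: "y \<in> carrier_mat n d" and d: "d \<le> 1" and nz: "d = 1 \<Longrightarrow> \<exists>p<n. y $$ (p, 0) \<noteq> 0"
    and C: "C \<in> carrier_mat d m" "C' \<in> carrier_mat d m" and eq: "y * C = y * C'"
  shows "C = C'"
proof (rule eq_matI)
  fix l q assume "l < dim_row C'" "q < dim_col C'"
  with C d have l: "l = 0" "d = 1" and q: "q < m" by auto
  then obtain p where p: "p < n" "y $$ (p, 0) \<noteq> 0" using nz by blast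
  have "y $$ (p, 0) * C $$ (0, q) = y $$ (p, 0) * C' $$ (0, q)"
    using arg_cong[OF eq, of "\<lambda>M. M $$ (p, q)"] p(1) q y C d l(2)
      mult_mat_inner_le_1_index[OF y C(1) d p(1) q] mult_mat_inner_le_1_index[OF y C(2) d p(1) q]
    by (simp del: index_mult_mat(1))
  with p(2) l show "C $$ (l, q) = C' $$ (l, q)" by simp
qed (use C in auto)

lemma mult_right_cancel_inner_le_1:
  fixes x :: "'a::field mat"
  assumes x: "x \<in> carrier_mat d m" and d: "d \<le> 1" and nz: "d = 1 \<Longrightarrow> \<exists>q<m. x $$ (0, q) \<noteq> 0"
    and C: "C \<in> carrier_mat n d" "C' \<in> carrier_mat n d" and eq: "C * x = C' * x"
  shows "C = C'"
proof (rule eq_matI)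
  fix p k assume "p < dim_row C'" "k < dim_col C'"
  with C d have k: "k = 0" "d = 1" and p: "p < n" by auto
  then obtain q where q: "q < m" "x $$ (0, q) \<noteq> 0" using nz by blast
  have "C $$ (p, 0) * x $$ (0, q) = C' $$ (p, 0) * x $$ (0, q)"
    using arg_cong[OF eq, of "\<lambda>M. M $$ (p, q)"] p q(1) x C d k(2)
      mult_mat_inner_le_1_index[OF C(1) x d p q(1)] mult_mat_inner_le_1_index[OF C(2) x d p q(1)]
    by (simp del: index_mult_mat(1))
  with q(2) k show "C $$ (p, k) = C' $$ (p, k)" by simp
qed (use C in auto)

lemma mult_eq_mult_factor_inner_le_1:
  fixes u x y w :: "'a::field mat"
  assumes u: "u \<in> carrier_mat n dX" and x: "x \<in> carrier_mat dX m"
    and y: "y \<in> carrier_mat n dY" and w: "w \<in> carrier_mat dY m"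
    and dX: "dX \<le> 1" and dY: "dY \<le> 1"
    and nzx: "dX = 1 \<Longrightarrow> \<exists>q<m. x $$ (0, q) \<noteq> 0" and nzy: "dY = 1 \<Longrightarrow> \<exists>p<n. y $$ (p, 0) \<noteq> 0"
    and eq: "u * x = y * w"
  obtains c where "c \<in> carrier_mat dY dX" "u = y * c" "c * x = w"
proof -
  obtain q0 where q0: "dX = 1 \<Longrightarrow> q0 < m \<and> x $$ (0, q0) \<noteq> 0"
    using nzx by blast
  \<comment> \<open>q0 is arbitrary when dX = 0, but then c has no columns\<close>
  define c where "c = mat dY dX (\<lambda>(l, _). w $$ (l, q0) / x $$ (0, q0))"
  have c: "c \<in> carrier_mat dY dX"
    by (simp add: c_def)
  have "u = y * c"
  proof (rule eq_matI)
    fix p k assume "p < dim_row (y * c)" "k < dim_col (y * c)"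
    with y c dX have p: "p < n" and k: "k = 0" "dX = 1" by auto
    have "(y * c) $$ (p, 0) = (\<Sum>l<dY. y $$ (p, l) * w $$ (l, q0)) / x $$ (0, q0)"
      using index_mult_mat_sum[OF y c p] k by (simp add: c_def sum_divide_distrib)
    also have "\<dots> = (u * x) $$ (p, q0) / x $$ (0, q0)"
      using index_mult_mat_sum[OF y w p] q0 k eq by simp
    also have "\<dots> = u $$ (p, 0)"
      using mult_mat_inner_le_1_index[OF u x dX p] q0 k by simp
    finally show "u $$ (p, k) = (y * c) $$ (p, k)"
      using k by simp
  qed (use u y c in auto)
  moreover have "c * x = w"
  proof (rule mult_left_cancel_inner_le_1[OF y dY nzy _ w])
    show "y * (c * x) = y * w"
      using \<open>u = y * c\<close> eq assoc_mult_mat[OF y c x] by simp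
  qed (use c x in auto)
  ultimately show thesis
    using that c by blast
qed

lemma carrier_mat_0_rows_eq: "A \<in> carrier_mat 0 n \<Longrightarrow> B \<in> carrier_mat 0 n \<Longrightarrow> A = B"
  by (rule eq_matI) auto

lemma carrier_mat_0_cols_eq: "A \<in> carrier_mat n 0 \<Longrightarrow> B \<in> carrier_mat n 0 \<Longrightarrow> A = B"
  by (rule eq_matI) auto

lemma one_mat_1_neq_zero_mat: "(1\<^sub>m 1 :: 'a::zero_neq_one mat) \<noteq> 0\<^sub>m 1 1"
  by (auto simp: mat_eq_iff)

lemma sum_Collect_option:
  fixes f :: "'a::finite option \<Rightarrow> 'b::comm_monoid_add"
  shows "(\<Sum>a\<in>{a. P a}. f a) = (if P None then f None else 0) + (\<Sum>b\<in>{b. P (Some b)}. f (Some b))"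
proof -
  have "{a. P a} = (if P None then {None} else {}) \<union> Some ` {b. P (Some b)}"
  proof (rule Set.set_eqI)
    show "x \<in> {a. P a} \<longleftrightarrow> x \<in> (if P None then {None} else {}) \<union> Some ` {b. P (Some b)}" for x
      by (cases x) auto
  qed
  then show ?thesis
    by (simp add: sum.union_disjoint sum.reindex)
qed

section \<open>Representations of double quivers\<close>

lemma is_repD:
  assumes "is_rep ta ha X"
  shows "snd X a False \<in> carrier_mat (fst X (ha a)) (fst X (ta a))"
    and "snd X a True \<in> carrier_mat (fst X (ta a)) (fst X (ha a))"
  using assms by (auto simp: is_rep_def)

lemma is_rep_cycle_carrier:
  assumes "is_rep ta ha X"
  shows "ha a = i \<Longrightarrow> snd X a False * snd X a True \<in> carrier_mat (fst X i) (fst X i)"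
    and "ta a = i \<Longrightarrow> snd X a True * snd X a False \<in> carrier_mat (fst X i) (fst X i)"
  using is_repD[OF assms, of a] by (auto intro: mult_carrier_mat)

lemma is_homD:
  assumes "is_hom ta ha X Y f"
  shows "f i \<in> carrier_mat (fst Y i) (fst X i)"
    and "f (ha a) * snd X a False = snd Y a False * f (ta a)"
    and "f (ta a) * snd X a True = snd Y a True * f (ha a)"
  using assms by (auto simp: is_hom_def)

lemma rep_iso_refl:
  assumes "is_rep ta ha Y"
  shows "rep_iso ta ha Y Y"
proof -
  have "is_hom ta ha Y Y (\<lambda>i. 1\<^sub>m (fst Y i))"
    by (simp add: is_hom_def left_mult_one_mat[OF is_repD(1)[OF assms]] right_mult_one_mat[OF is_repD(1)[OF assms]]
        left_mult_one_mat[OF is_repD(2)[OF assms]] right_mult_one_mat[OF is_repD(2)[OF assms]])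
  then show ?thesis
    unfolding rep_iso_def by fastforce
qed

lemma Xc_carrier [simp]: "Xc ta ha lam X i \<in> carrier_mat (fst X i) (fst X i)"
  by (simp add: Xc_def)

lemma Xc_eq_mat_sum:
  "Xc ta ha lam X i =
     mat_sum (fst X i) (fst X i) {a. ha a = i} (\<lambda>a. snd X a False * snd X a True)
   - mat_sum (fst X i) (fst X i) {a. ta a = i} (\<lambda>a. snd X a True * snd X a False)
   - lam i \<cdot>\<^sub>m 1\<^sub>m (fst X i)"
  by (intro eq_matI) (auto simp: Xc_def mat_sum_def)

lemma hom_Xc_commute:
  fixes lam :: "'v \<Rightarrow> 'k::field"
  assumes X: "is_rep ta ha X" and Y: "is_rep ta ha Y" and g: "is_hom ta ha X Y g"
  shows "g i * Xc ta ha lam X i = Xc ta ha lam Y i * g i"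
proof -
  let ?n = "fst X i" and ?m = "fst Y i"
  let ?H = "{a. ha a = i}" and ?T = "{a. ta a = i}"
  note cX = is_repD[OF X] and cY = is_repD[OF Y] and cg = is_homD(1)[OF g]
  have H: "g i * (snd X a False * snd X a True) = (snd Y a False * snd Y a True) * g i" if "ha a = i" for a
    using mult_intertwine[OF cg cg cX(1) cY(1) cX(2) cY(2) is_homD(2,3)[OF g, of a]] that by simp
  have T: "g i * (snd X a True * snd X a False) = (snd Y a True * snd Y a False) * g i" if "ta a = i" for a
    using mult_intertwine[OF cg cg cX(2) cY(2) cX(1) cY(1) is_homD(3,2)[OF g, of a]] that by simp
  have "g i * Xc ta ha lam X i
      = g i * mat_sum ?n ?n ?H (\<lambda>a. snd X a False * snd X a True)
      - g i * mat_sum ?n ?n ?T (\<lambda>a. snd X a True * snd X a False) - g i * (lam i \<cdot>\<^sub>m 1\<^sub>m ?n)"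
    unfolding Xc_eq_mat_sum by (rule mult_minus_minus_distrib_mat[OF cg]) auto
  also have "\<dots> = mat_sum ?m ?m ?H (\<lambda>a. snd Y a False * snd Y a True) * g i
      - mat_sum ?m ?m ?T (\<lambda>a. snd Y a True * snd Y a False) * g i - (lam i \<cdot>\<^sub>m 1\<^sub>m ?m) * g i"
  proof -
    have "g i * mat_sum ?n ?n ?H (\<lambda>a. snd X a False * snd X a True)
        = mat_sum ?m ?m ?H (\<lambda>a. snd Y a False * snd Y a True) * g i"
      by (rule mat_sum_intertwine[OF cg]) (use is_rep_cycle_carrier[OF X] is_rep_cycle_carrier[OF Y] H in auto)
    moreover have "g i * mat_sum ?n ?n ?T (\<lambda>a. snd X a True * snd X a False)
        = mat_sum ?m ?m ?T (\<lambda>a. snd Y a True * snd Y a False) * g i"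
      by (rule mat_sum_intertwine[OF cg]) (use is_rep_cycle_carrier[OF X] is_rep_cycle_carrier[OF Y] T in auto)
    moreover have "g i * (lam i \<cdot>\<^sub>m 1\<^sub>m ?n) = (lam i \<cdot>\<^sub>m 1\<^sub>m ?m) * g i"
      using cg[of i] by (simp add: mult_smult_distrib[OF cg one_carrier_mat] mult_smult_assoc_mat[OF one_carrier_mat cg])
    ultimately show ?thesis by simp
  qed
  also have "\<dots> = Xc ta ha lam Y i * g i"
    unfolding Xc_eq_mat_sum by (rule minus_minus_mult_distrib_mat[OF _ _ _ cg, symmetric]) auto
  finally show ?thesis .
qed

lemma sum_mat_trace_Xc:
  fixes ta ha :: "'e::finite \<Rightarrow> 'v::finite" and lam :: "'v \<Rightarrow> 'k::field"
  assumes X: "is_rep ta ha X"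
  shows "(\<Sum>i\<in>UNIV. mat_trace (Xc ta ha lam X i)) = - (\<Sum>i\<in>UNIV. lam i * of_nat (fst X i))"
proof -
  define t where "t a = mat_trace (snd X a False * snd X a True)" for a
  have t_swap: "mat_trace (snd X a True * snd X a False) = t a" for a
    unfolding t_def using is_repD[OF X] by (rule mat_trace_mult_comm[symmetric])
  have fibres: "(\<Sum>i\<in>UNIV. \<Sum>a\<in>{a. f a = i}. t a) = (\<Sum>a\<in>UNIV. t a)" for f :: "'e \<Rightarrow> 'v"
    using sum.group[of UNIV UNIV f t] by simp
  have "mat_trace (Xc ta ha lam X i)
      = (\<Sum>a\<in>{a. ha a = i}. t a) - (\<Sum>a\<in>{a. ta a = i}. t a) - lam i * of_nat (fst X i)" for i
  proof -
    have "mat_trace (Xc ta ha lam X i)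
      = mat_trace (mat_sum (fst X i) (fst X i) {a. ha a = i} (\<lambda>a. snd X a False * snd X a True))
      - mat_trace (mat_sum (fst X i) (fst X i) {a. ta a = i} (\<lambda>a. snd X a True * snd X a False))
      - mat_trace (lam i \<cdot>\<^sub>m 1\<^sub>m (fst X i))"
      unfolding Xc_eq_mat_sum by (simp add: mat_trace_def sum_subtractf)
    moreover have "mat_trace (mat_sum (fst X i) (fst X i) {a. ha a = i} (\<lambda>a. snd X a False * snd X a True))
        = (\<Sum>a\<in>{a. ha a = i}. t a)"
      unfolding t_def by (rule mat_trace_mat_sum) (simp add: is_rep_cycle_carrier[OF X])
    moreover have "mat_trace (mat_sum (fst X i) (fst X i) {a. ta a = i} (\<lambda>a. snd X a True * snd X a False))
        = (\<Sum>a\<in>{a. ta a = i}. t a)"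
      unfolding t_swap[symmetric] by (rule mat_trace_mat_sum) (simp add: is_rep_cycle_carrier[OF X])
    ultimately show ?thesis
      by (simp add: mat_trace_smult_one)
  qed
  then show ?thesis
    by (simp add: sum_subtractf fibres)
qed

lemma sum_lam_dim_eq_0_iff_mat_trace:
  fixes ta ha :: "'e::finite \<Rightarrow> 'v::finite" and lam :: "'v \<Rightarrow> 'k::field"
  assumes X: "is_rep ta ha X" and Xc0: "\<And>i. i \<noteq> v \<Longrightarrow> Xc ta ha lam X i = 0\<^sub>m (fst X i) (fst X i)"
  shows "(\<Sum>i\<in>UNIV. lam i * of_nat (fst X i)) = 0 \<longleftrightarrow> mat_trace (Xc ta ha lam X v) = 0"
proof -
  have "(\<Sum>i\<in>UNIV. mat_trace (Xc ta ha lam X i)) = (\<Sum>i\<in>UNIV. if i = v then mat_trace (Xc ta ha lam X v) else 0)"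
    using Xc0 by (intro sum.cong) auto
  then have "mat_trace (Xc ta ha lam X v) = - (\<Sum>i\<in>UNIV. lam i * of_nat (fst X i))"
    using sum_mat_trace_Xc[OF X, of lam] by simp
  then show ?thesis by simp
qed

section \<open>The quiver Q_infinity and the simple module S(infinity)\<close>

abbreviation rep_inf :: "('e \<Rightarrow> 'v) \<Rightarrow> ('e \<Rightarrow> 'v) \<Rightarrow> 'v \<Rightarrow> ('v option, 'e option, 'k) rep \<Rightarrow> bool" where
  "rep_inf ta ha v \<equiv> is_rep (tl_inf ta) (hd_inf ha v)"

abbreviation hom_inf :: "('e \<Rightarrow> 'v) \<Rightarrow> ('e \<Rightarrow> 'v) \<Rightarrow> 'v \<Rightarrow> ('v option, 'e option, 'k::field) rep
    \<Rightarrow> ('v option, 'e option, 'k) rep \<Rightarrow> ('v option \<Rightarrow> 'k mat) \<Rightarrow> bool" where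
  "hom_inf ta ha v \<equiv> is_hom (tl_inf ta) (hd_inf ha v)"

abbreviation Xc_inf :: "('e::finite \<Rightarrow> 'v) \<Rightarrow> ('e \<Rightarrow> 'v) \<Rightarrow> 'v \<Rightarrow> ('v \<Rightarrow> 'k::field)
    \<Rightarrow> ('v option, 'e option, 'k) rep \<Rightarrow> 'v option \<Rightarrow> 'k mat" where
  "Xc_inf ta ha v lam \<equiv> Xc (tl_inf ta) (hd_inf ha v) (lam_inf lam)"

abbreviation arrow_a :: "('v option, 'e option, 'k) rep \<Rightarrow> 'k mat" where
  "arrow_a X \<equiv> snd X None False"

abbreviation arrow_a_star :: "('v option, 'e option, 'k) rep \<Rightarrow> 'k mat" where
  "arrow_a_star X \<equiv> snd X None True"

lemma forget_simps [simp]: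
  "fst (forget X) i = fst X (Some i)" "snd (forget X) a b = snd X (Some a) b"
  by (simp_all add: forget_def)

lemma forget_hom_apply [simp]: "forget_hom f i = f (Some i)"
  by (simp add: forget_hom_def)

lemma rep_inf_iff:
  "rep_inf ta ha v X \<longleftrightarrow> is_rep ta ha (forget X)
     \<and> arrow_a X \<in> carrier_mat (fst X (Some v)) (fst X None)
     \<and> arrow_a_star X \<in> carrier_mat (fst X None) (fst X (Some v))"
  by (auto simp: is_rep_def split_option_all tl_inf_def hd_inf_def)

lemma hom_inf_iff:
  "hom_inf ta ha v X Y f \<longleftrightarrow> is_hom ta ha (forget X) (forget Y) (forget_hom f)
     \<and> f None \<in> carrier_mat (fst Y None) (fst X None)
     \<and> f (Some v) * arrow_a X = arrow_a Y * f None
     \<and> f None * arrow_a_star X = arrow_a_star Y * f (Some v)"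
  by (auto simp: is_hom_def split_option_all tl_inf_def hd_inf_def)

lemma Xc_inf_Some:
  fixes lam :: "'v \<Rightarrow> 'k::field"
  assumes "rep_inf ta ha v X"
  shows "Xc_inf ta ha v lam X (Some i) =
    (if i = v then Xc ta ha lam (forget X) i + arrow_a X * arrow_a_star X else Xc ta ha lam (forget X) i)"
  using assms
  by (intro eq_matI) (auto simp: rep_inf_iff Xc_def sum_Collect_option tl_inf_def hd_inf_def lam_inf_def)

lemma Xc_inf_None:
  fixes lam :: "'v \<Rightarrow> 'k::field"
  assumes "rep_inf ta ha v X"
  shows "Xc_inf ta ha v lam X None = - (arrow_a_star X * arrow_a X)"
  using assms
  by (intro eq_matI) (auto simp: rep_inf_iff Xc_def sum_Collect_option tl_inf_def hd_inf_def lam_inf_def)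

lemma is_Pi_module_inf_iff:
  fixes lam :: "'v \<Rightarrow> 'k::field"
  shows "is_Pi_module (tl_inf ta) (hd_inf ha v) (lam_inf lam) X \<longleftrightarrow> rep_inf ta ha v X
     \<and> (\<forall>i. i \<noteq> v \<longrightarrow> Xc ta ha lam (forget X) i = 0\<^sub>m (fst X (Some i)) (fst X (Some i)))
     \<and> Xc ta ha lam (forget X) v = - (arrow_a X * arrow_a_star X)
     \<and> arrow_a_star X * arrow_a X = 0\<^sub>m (fst X None) (fst X None)"
proof (cases "rep_inf ta ha v X")
  case True
  then have A: "arrow_a X \<in> carrier_mat (fst X (Some v)) (fst X None)"
    and B: "arrow_a_star X \<in> carrier_mat (fst X None) (fst X (Some v))"
    by (simp_all add: rep_inf_iff)
  have "Xc_inf ta ha v lam X None = 0\<^sub>m (fst X None) (fst X None)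
      \<longleftrightarrow> arrow_a_star X * arrow_a X = 0\<^sub>m (fst X None) (fst X None)"
    using uminus_eq_0_iff_mat[OF mult_carrier_mat[OF B A]] by (simp add: Xc_inf_None[OF True])
  moreover have "Xc_inf ta ha v lam X (Some v) = 0\<^sub>m (fst X (Some v)) (fst X (Some v))
      \<longleftrightarrow> Xc ta ha lam (forget X) v = - (arrow_a X * arrow_a_star X)"
  proof -
    have "Xc ta ha lam (forget X) v \<in> carrier_mat (fst X (Some v)) (fst X (Some v))"
      using Xc_carrier[of ta ha lam "forget X" v] by simp
    from add_eq_0_iff_eq_uminus_mat[OF this mult_carrier_mat[OF A B]] show ?thesis
      by (simp add: Xc_inf_Some[OF True])
  qed
  ultimately show ?thesis
    using True by (auto simp: is_Pi_module_def split_option_all Xc_inf_Some)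
qed (simp add: is_Pi_module_def)

lemma S_inf_simps [simp]:
  "fst (S_inf ta ha v) = S_dim"
  "snd (S_inf ta ha v) a False = 0\<^sub>m (S_dim (hd_inf ha v a)) (S_dim (tl_inf ta a))"
  "snd (S_inf ta ha v) a True = 0\<^sub>m (S_dim (tl_inf ta a)) (S_dim (hd_inf ha v a))"
  by (simp_all add: S_inf_def)

lemma S_dim_simps [simp]: "S_dim None = 1" "S_dim (Some i) = 0" "S_dim (hd_inf ha v a) = 0"
  by (simp_all add: S_dim_def hd_inf_def split: option.split)

lemma hom_to_S_inf_iff:
  assumes X: "rep_inf ta ha v X"
  shows "hom_inf ta ha v X (S_inf ta ha v) f \<longleftrightarrow> (\<forall>i. f i \<in> carrier_mat (S_dim i) (fst X i))
    \<and> f None * arrow_a_star X = 0\<^sub>m 1 (fst X (Some v))"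
proof
  assume f: "hom_inf ta ha v X (S_inf ta ha v) f"
  have "f None * arrow_a_star X = 0\<^sub>m 1 0 * f (Some v)"
    using is_homD(3)[OF f, of None] by (simp add: tl_inf_def hd_inf_def)
  moreover have "f (Some v) \<in> carrier_mat 0 (fst X (Some v))"
    using is_homD(1)[OF f, of "Some v"] by simp
  ultimately show "(\<forall>i. f i \<in> carrier_mat (S_dim i) (fst X i)) \<and> f None * arrow_a_star X = 0\<^sub>m 1 (fst X (Some v))"
    using is_homD(1)[OF f] by (simp add: left_mult_zero_mat)
next
  assume "(\<forall>i. f i \<in> carrier_mat (S_dim i) (fst X i)) \<and> f None * arrow_a_star X = 0\<^sub>m 1 (fst X (Some v))"
  then have f: "f i \<in> carrier_mat (S_dim i) (fst X i)" and fb: "f None * arrow_a_star X = 0\<^sub>m 1 (fst X (Some v))"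
    for i by auto
  have "f (hd_inf ha v a) * snd X a False = snd (S_inf ta ha v) a False * f (tl_inf ta a)" for a
  proof (rule carrier_mat_0_rows_eq)
    show "f (hd_inf ha v a) * snd X a False \<in> carrier_mat 0 (fst X (tl_inf ta a))"
      using mult_carrier_mat[OF f is_repD(1)[OF X]] by simp
  qed (use mult_carrier_mat[OF zero_carrier_mat f] in simp)
  moreover have "f (tl_inf ta a) * snd X a True = snd (S_inf ta ha v) a True * f (hd_inf ha v a)" for a
  proof (cases a)
    case None
    then show ?thesis using f[of "Some v"] fb by (simp add: tl_inf_def hd_inf_def left_mult_zero_mat)
  next
    case (Some b)
    then have "S_dim (tl_inf ta a) = 0" by (simp add: tl_inf_def)
    then show ?thesis
      using mult_carrier_mat[OF f is_repD(2)[OF X, of a]] f[of "hd_inf ha v a"]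
      by (intro carrier_mat_0_rows_eq) auto
  qed
  ultimately show "hom_inf ta ha v X (S_inf ta ha v) f"
    using f by (simp add: is_hom_def)
qed

lemma hom_from_S_inf_iff:
  assumes X: "rep_inf ta ha v X"
  shows "hom_inf ta ha v (S_inf ta ha v) X f \<longleftrightarrow> (\<forall>i. f i \<in> carrier_mat (fst X i) (S_dim i))
    \<and> arrow_a X * f None = 0\<^sub>m (fst X (Some v)) 1"
proof
  assume f: "hom_inf ta ha v (S_inf ta ha v) X f"
  have "f (Some v) * 0\<^sub>m 0 1 = arrow_a X * f None"
    using is_homD(2)[OF f, of None] by (simp add: tl_inf_def hd_inf_def)
  moreover have "f (Some v) \<in> carrier_mat (fst X (Some v)) 0"
    using is_homD(1)[OF f, of "Some v"] by simp
  ultimately show "(\<forall>i. f i \<in> carrier_mat (fst X i) (S_dim i)) \<and> arrow_a X * f None = 0\<^sub>m (fst X (Some v)) 1"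
    using is_homD(1)[OF f] by (simp add: right_mult_zero_mat)
next
  assume "(\<forall>i. f i \<in> carrier_mat (fst X i) (S_dim i)) \<and> arrow_a X * f None = 0\<^sub>m (fst X (Some v)) 1"
  then have f: "f i \<in> carrier_mat (fst X i) (S_dim i)" and fa: "arrow_a X * f None = 0\<^sub>m (fst X (Some v)) 1"
    for i by auto
  have "f (tl_inf ta a) * snd (S_inf ta ha v) a True = snd X a True * f (hd_inf ha v a)" for a
  proof (rule carrier_mat_0_cols_eq)
    show "snd X a True * f (hd_inf ha v a) \<in> carrier_mat (fst X (tl_inf ta a)) 0"
      using mult_carrier_mat[OF is_repD(2)[OF X] f] by simp
  qed (use mult_carrier_mat[OF f zero_carrier_mat] in simp)
  moreover have "f (hd_inf ha v a) * snd (S_inf ta ha v) a False = snd X a False * f (tl_inf ta a)" for a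
  proof (cases a)
    case None
    then show ?thesis using f[of "Some v"] fa by (simp add: tl_inf_def hd_inf_def right_mult_zero_mat)
  next
    case (Some b)
    then have "S_dim (tl_inf ta a) = 0" by (simp add: tl_inf_def)
    then show ?thesis
      using mult_carrier_mat[OF is_repD(1)[OF X, of a] f] f[of "hd_inf ha v a"]
      by (intro carrier_mat_0_cols_eq) auto
  qed
  ultimately show "hom_inf ta ha v (S_inf ta ha v) X f"
    using f by (simp add: is_hom_def)
qed

lemma no_hom_to_S_inf_iff:
  fixes X :: "('v option, 'e option, 'k::field) rep"
  assumes X: "rep_inf ta ha v X" and d: "fst X None \<le> 1"
  shows "(\<forall>f. hom_inf ta ha v X (S_inf ta ha v) f \<longrightarrow> f = zero_hom X (S_inf ta ha v))
    \<longleftrightarrow> (fst X None = 1 \<longrightarrow> (\<exists>j<fst X (Some v). arrow_a_star X $$ (0, j) \<noteq> 0))"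
    (is "?no_hom \<longleftrightarrow> ?nonzero")
proof
  assume ?no_hom
  show ?nonzero
  proof (rule impI, rule ccontr)
    assume d1: "fst X None = 1" and "\<not> (\<exists>j<fst X (Some v). arrow_a_star X $$ (0, j) \<noteq> 0)"
    then have "arrow_a_star X = 0\<^sub>m 1 (fst X (Some v))"
      using X by (auto simp: rep_inf_iff mat_eq_iff)
    then have "hom_inf ta ha v X (S_inf ta ha v) ((zero_hom X (S_inf ta ha v))(None := 1\<^sub>m 1))"
      using X d1 by (simp add: hom_to_S_inf_iff zero_hom_def)
    with \<open>?no_hom\<close> have "(zero_hom X (S_inf ta ha v))(None := 1\<^sub>m 1) = zero_hom X (S_inf ta ha v)"
      by blast
    from fun_cong[OF this, of None] d1 one_mat_1_neq_zero_mat[where 'a = 'k] show False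
      by (simp add: zero_hom_def)
  qed
next
  assume nz: ?nonzero
  have B: "arrow_a_star X \<in> carrier_mat (fst X None) (fst X (Some v))"
    using X by (simp add: rep_inf_iff)
  show ?no_hom
  proof (intro allI impI ext)
    fix f i assume "hom_inf ta ha v X (S_inf ta ha v) f"
    then have f: "\<And>i. f i \<in> carrier_mat (S_dim i) (fst X i)"
      and fb: "f None * arrow_a_star X = 0\<^sub>m 1 (fst X (Some v))"
      by (simp_all add: hom_to_S_inf_iff[OF X])
    show "f i = zero_hom X (S_inf ta ha v) i"
    proof (cases i)
      case None
      have fN: "f None \<in> carrier_mat 1 (fst X None)"
        using f[of None] by simp
      have "f None = 0\<^sub>m 1 (fst X None)"
      proof (rule mult_right_cancel_inner_le_1[OF B d _ fN zero_carrier_mat])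
        show "f None * arrow_a_star X = 0\<^sub>m 1 (fst X None) * arrow_a_star X"
          using fb B by (simp add: left_mult_zero_mat)
      qed (use nz in simp)
      then show ?thesis
        using None by (simp add: zero_hom_def)
    qed (use f[of i] in \<open>auto simp: zero_hom_def intro: carrier_mat_0_rows_eq\<close>)
  qed
qed

lemma no_hom_from_S_inf_iff:
  fixes X :: "('v option, 'e option, 'k::field) rep"
  assumes X: "rep_inf ta ha v X" and d: "fst X None \<le> 1"
  shows "(\<forall>f. hom_inf ta ha v (S_inf ta ha v) X f \<longrightarrow> f = zero_hom (S_inf ta ha v) X)
    \<longleftrightarrow> (fst X None = 1 \<longrightarrow> (\<exists>i<fst X (Some v). arrow_a X $$ (i, 0) \<noteq> 0))"
    (is "?no_hom \<longleftrightarrow> ?nonzero")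
proof
  assume ?no_hom
  show ?nonzero
  proof (rule impI, rule ccontr)
    assume d1: "fst X None = 1" and "\<not> (\<exists>i<fst X (Some v). arrow_a X $$ (i, 0) \<noteq> 0)"
    then have "arrow_a X = 0\<^sub>m (fst X (Some v)) 1"
      using X by (auto simp: rep_inf_iff mat_eq_iff)
    then have "hom_inf ta ha v (S_inf ta ha v) X ((zero_hom (S_inf ta ha v) X)(None := 1\<^sub>m 1))"
      using X d1 by (simp add: hom_from_S_inf_iff zero_hom_def)
    with \<open>?no_hom\<close> have "(zero_hom (S_inf ta ha v) X)(None := 1\<^sub>m 1) = zero_hom (S_inf ta ha v) X"
      by blast
    from fun_cong[OF this, of None] d1 one_mat_1_neq_zero_mat[where 'a = 'k] show False
      by (simp add: zero_hom_def)
  qed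
next
  assume nz: ?nonzero
  have A: "arrow_a X \<in> carrier_mat (fst X (Some v)) (fst X None)"
    using X by (simp add: rep_inf_iff)
  show ?no_hom
  proof (intro allI impI ext)
    fix f i assume "hom_inf ta ha v (S_inf ta ha v) X f"
    then have f: "\<And>i. f i \<in> carrier_mat (fst X i) (S_dim i)"
      and fa: "arrow_a X * f None = 0\<^sub>m (fst X (Some v)) 1"
      by (simp_all add: hom_from_S_inf_iff[OF X])
    show "f i = zero_hom (S_inf ta ha v) X i"
    proof (cases i)
      case None
      have fN: "f None \<in> carrier_mat (fst X None) 1"
        using f[of None] by simp
      have "f None = 0\<^sub>m (fst X None) 1"
      proof (rule mult_left_cancel_inner_le_1[OF A d _ fN zero_carrier_mat])
        show "arrow_a X * f None = arrow_a X * 0\<^sub>m (fst X None) 1"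
          using fa A by (simp add: right_mult_zero_mat)
      qed (use nz in simp)
      then show ?thesis
        using None by (simp add: zero_hom_def)
    qed (use f[of i] in \<open>auto simp: zero_hom_def intro: carrier_mat_0_cols_eq\<close>)
  qed
qed

lemma C_obj_iff:
  "C_obj ta ha lam v X \<longleftrightarrow> is_Pi_module (tl_inf ta) (hd_inf ha v) (lam_inf lam) X \<and> fst X None \<le> 1
     \<and> (fst X None = 1 \<longrightarrow> (\<exists>i<fst X (Some v). arrow_a X $$ (i, 0) \<noteq> 0)
                          \<and> (\<exists>j<fst X (Some v). arrow_a_star X $$ (0, j) \<noteq> 0))"
  using no_hom_to_S_inf_iff[of ta ha v X] no_hom_from_S_inf_iff[of ta ha v X]
  by (auto simp: C_obj_def is_Pi_module_def)

lemma C_objD: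
  assumes "C_obj ta ha lam v X"
  shows "rep_inf ta ha v X" and "fst X None \<le> 1"
    and "arrow_a X \<in> carrier_mat (fst X (Some v)) (fst X None)"
    and "arrow_a_star X \<in> carrier_mat (fst X None) (fst X (Some v))"
    and "\<And>i. i \<noteq> v \<Longrightarrow> Xc ta ha lam (forget X) i = 0\<^sub>m (fst X (Some i)) (fst X (Some i))"
    and "Xc ta ha lam (forget X) v = - (arrow_a X * arrow_a_star X)"
    and "arrow_a_star X * arrow_a X = 0\<^sub>m (fst X None) (fst X None)"
    and "fst X None = 1 \<Longrightarrow> \<exists>i<fst X (Some v). arrow_a X $$ (i, 0) \<noteq> 0"
    and "fst X None = 1 \<Longrightarrow> \<exists>j<fst X (Some v). arrow_a_star X $$ (0, j) \<noteq> 0"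
  using assms by (simp_all add: C_obj_iff is_Pi_module_inf_iff rep_inf_iff)

section \<open>The forgetful functor\<close>

lemma forget_is_nearly:
  fixes ta ha :: "'e::finite \<Rightarrow> 'v::finite" and lam :: "'v \<Rightarrow> 'k::field"
  assumes "C_obj ta ha lam v X"
  shows "is_nearly ta ha lam v (forget X)"
proof -
  note d = C_objD(2)[OF assms] and A = C_objD(3)[OF assms] and B = C_objD(4)[OF assms]
    and Xc0 = C_objD(5)[OF assms] and Xcv = C_objD(6)[OF assms] and BA = C_objD(7)[OF assms]
  have Q: "is_rep ta ha (forget X)"
    using C_objD(1)[OF assms] by (simp add: rep_inf_iff)
  have "mat_trace (Xc ta ha lam (forget X) v) = - mat_trace (arrow_a_star X * arrow_a X)"
    using mat_trace_mult_comm[OF A B] by (simp add: Xcv mat_trace_uminus[OF mult_carrier_mat[OF A B]])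
  moreover have "(\<Sum>i\<in>UNIV. lam i * of_nat (fst (forget X) i)) = 0
      \<longleftrightarrow> mat_trace (Xc ta ha lam (forget X) v) = 0"
    by (rule sum_lam_dim_eq_0_iff_mat_trace[OF Q]) (use Xc0 in simp)
  ultimately have "(\<Sum>i\<in>UNIV. lam i * of_nat (fst (forget X) i)) = 0"
    using BA by simp
  moreover have "vec_space.rank (fst X (Some v)) (Xc ta ha lam (forget X) v) \<le> 1"
    using vec_space.rank_mult_inner_le_1[OF uminus_carrier_mat[OF A] B d] A B
    by (simp add: Xcv uminus_mult_left_mat)
  ultimately show ?thesis
    using Q Xc0 by (simp add: is_nearly_def)
qed

lemma forget_is_hom:
  "hom_inf ta ha v X Y f \<Longrightarrow> is_hom ta ha (forget X) (forget Y) (forget_hom f)"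
  by (simp add: hom_inf_iff)

lemma forget_faithful:
  fixes lam :: "'v \<Rightarrow> 'k::field"
  assumes X: "C_obj ta ha lam v X"
    and f: "hom_inf ta ha v X Y f" and g: "hom_inf ta ha v X Y g"
    and eq: "forget_hom f = forget_hom g"
  shows "f = g"
proof
  fix i
  show "f i = g i"
  proof (cases i)
    case (Some j)
    then show ?thesis using fun_cong[OF eq, of j] by simp
  next
    case None
    note B = C_objD(4)[OF X] and dX = C_objD(2)[OF X] and nz = C_objD(9)[OF X]
    from f have f': "f None \<in> carrier_mat (fst Y None) (fst X None)"
      "f None * arrow_a_star X = arrow_a_star Y * f (Some v)"
      by (simp_all add: hom_inf_iff)
    from g have g': "g None \<in> carrier_mat (fst Y None) (fst X None)"
      "g None * arrow_a_star X = arrow_a_star Y * g (Some v)"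
      by (simp_all add: hom_inf_iff)
    have "f (Some v) = g (Some v)"
      using fun_cong[OF eq, of v] by simp
    with f'(2) g'(2) have "f None * arrow_a_star X = g None * arrow_a_star X"
      by simp
    then show ?thesis
      unfolding None using nz by (intro mult_right_cancel_inner_le_1[OF B dX _ f'(1) g'(1)]) auto
  qed
qed

lemma forget_full:
  fixes ta ha :: "'e::finite \<Rightarrow> 'v" and lam :: "'v \<Rightarrow> 'k::field"
  assumes X: "C_obj ta ha lam v X" and Y: "C_obj ta ha lam v Y"
    and g: "is_hom ta ha (forget X) (forget Y) g"
  shows "\<exists>f. hom_inf ta ha v X Y f \<and> forget_hom f = g"
proof -
  note AX = C_objD(3)[OF X] and BX = C_objD(4)[OF X] and AY = C_objD(3)[OF Y] and BY = C_objD(4)[OF Y]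
  have gv: "g v \<in> carrier_mat (fst Y (Some v)) (fst X (Some v))"
    using is_homD(1)[OF g, of v] by simp
  have "g v * (arrow_a X * arrow_a_star X) = (arrow_a Y * arrow_a_star Y) * g v"
    using hom_Xc_commute[OF _ _ g, of v lam] C_objD(1,6)[OF X] C_objD(1,6)[OF Y] AX BX AY BY gv
    by (simp add: rep_inf_iff uminus_mult_left_mat)
  then have "(g v * arrow_a X) * arrow_a_star X = arrow_a Y * (arrow_a_star Y * g v)"
    using assoc_mult_mat[OF gv AX BX] assoc_mult_mat[OF AY BY gv] by simp
  then obtain c where c: "c \<in> carrier_mat (fst Y None) (fst X None)"
    and ca: "g v * arrow_a X = arrow_a Y * c" and cb: "c * arrow_a_star X = arrow_a_star Y * g v"
    using mult_eq_mult_factor_inner_le_1[OF mult_carrier_mat[OF gv AX] BX AY mult_carrier_mat[OF BY gv]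
        C_objD(2)[OF X] C_objD(2)[OF Y] C_objD(9)[OF X] C_objD(8)[OF Y]] by blast
  define f where "f i = (case i of None \<Rightarrow> c | Some j \<Rightarrow> g j)" for i
  have "forget_hom f = g"
    by (auto simp: f_def)
  moreover have "hom_inf ta ha v X Y f"
    using g c ca cb \<open>forget_hom f = g\<close> by (simp add: hom_inf_iff f_def)
  ultimately show ?thesis by blast
qed

definition extend_inf :: "('v, 'e, 'k) rep \<Rightarrow> nat \<Rightarrow> 'k mat \<Rightarrow> 'k mat \<Rightarrow> ('v option, 'e option, 'k) rep" where
  "extend_inf Y d A B =
     (\<lambda>i. case i of None \<Rightarrow> d | Some j \<Rightarrow> fst Y j,
      \<lambda>a b. case a of None \<Rightarrow> (if b then B else A) | Some a' \<Rightarrow> snd Y a' b)"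

lemma extend_inf_simps [simp]:
  "forget (extend_inf Y d A B) = Y"
  "fst (extend_inf Y d A B) None = d"
  "fst (extend_inf Y d A B) (Some i) = fst Y i"
  "arrow_a (extend_inf Y d A B) = A"
  "arrow_a_star (extend_inf Y d A B) = B"
  by (simp_all add: extend_inf_def forget_def comp_def)

lemma forget_essentially_surjective:
  fixes ta ha :: "'e::finite \<Rightarrow> 'v::finite" and lam :: "'v \<Rightarrow> 'k::field"
  assumes Y: "is_nearly ta ha lam v Y"
  shows "\<exists>X. C_obj ta ha lam v X \<and> rep_iso ta ha (forget X) Y"
proof -
  from Y have rY: "is_rep ta ha Y" and sum0: "(\<Sum>i\<in>UNIV. lam i * of_nat (fst Y i)) = 0"
    and Xc0: "\<And>i. i \<noteq> v \<Longrightarrow> Xc ta ha lam Y i = 0\<^sub>m (fst Y i) (fst Y i)"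
    and rk: "vec_space.rank (fst Y v) (Xc ta ha lam Y v) \<le> 1"
    by (auto simp: is_nearly_def)
  obtain d P Q where d: "d \<le> 1" and P: "P \<in> carrier_mat (fst Y v) d" and Q: "Q \<in> carrier_mat d (fst Y v)"
    and M: "Xc ta ha lam Y v = P * Q"
    and nzP: "d = 1 \<Longrightarrow> \<exists>i<fst Y v. P $$ (i, 0) \<noteq> 0" and nzQ: "d = 1 \<Longrightarrow> \<exists>j<fst Y v. Q $$ (0, j) \<noteq> 0"
    using vec_space.rank_le_1_factorization[OF Xc_carrier rk] by metis
  define X where "X = extend_inf Y d (- P) Q"
  have "mat_trace (Q * P) = 0"
    using sum0 sum_lam_dim_eq_0_iff_mat_trace[OF rY Xc0] mat_trace_mult_comm[OF P Q] by (simp add: M)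
  then have "Q * P = 0\<^sub>m d d"
    using square_mat_le_1_eq_0_iff_trace[OF mult_carrier_mat[OF Q P] d] by simp
  then have "Q * - P = 0\<^sub>m d d"
    using uminus_eq_0_iff_mat[OF mult_carrier_mat[OF Q P]] P Q by (simp add: uminus_mult_right_mat)
  moreover have "rep_inf ta ha v X"
    using rY P Q by (simp add: X_def rep_inf_iff)
  moreover have "Xc ta ha lam (forget X) v = - (arrow_a X * arrow_a_star X)"
    using P Q by (simp add: X_def M uminus_mult_left_mat)
  moreover have "d = 1 \<Longrightarrow> \<exists>i<fst Y v. (- P) $$ (i, 0) \<noteq> 0"
    using nzP P by fastforce
  ultimately have "C_obj ta ha lam v X"
    using Xc0 d nzQ by (auto simp: C_obj_iff is_Pi_module_inf_iff X_def)
  moreover have "rep_iso ta ha (forget X) Y"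
    using rep_iso_refl[OF rY] by (simp add: X_def)
  ultimately show ?thesis by blast
qed

theorem lemma3p2:
  fixes ta ha :: "'e::finite \<Rightarrow> 'v::finite"
    and v :: 'v
    and lam :: "'v \<Rightarrow> 'k::field"
  assumes "alg_closed TYPE('k)"
  shows
    \<comment> \<open>the functor is well defined on objects\<close>
    "(\<forall>X. C_obj ta ha lam v X \<longrightarrow> is_nearly ta ha lam v (forget X))
     \<comment> \<open>and on morphisms\<close>
   \<and> (\<forall>X Y f. C_obj ta ha lam v X \<longrightarrow> C_obj ta ha lam v Y
        \<longrightarrow> is_hom (tl_inf ta) (hd_inf ha v) X Y f
        \<longrightarrow> is_hom ta ha (forget X) (forget Y) (forget_hom f))
     \<comment> \<open>faithful\<close>
   \<and> (\<forall>X Y f g. C_obj ta ha lam v X \<longrightarrow> C_obj ta ha lam v Y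
        \<longrightarrow> is_hom (tl_inf ta) (hd_inf ha v) X Y f
        \<longrightarrow> is_hom (tl_inf ta) (hd_inf ha v) X Y g
        \<longrightarrow> forget_hom f = forget_hom g \<longrightarrow> f = g)
     \<comment> \<open>full\<close>
   \<and> (\<forall>X Y g. C_obj ta ha lam v X \<longrightarrow> C_obj ta ha lam v Y
        \<longrightarrow> is_hom ta ha (forget X) (forget Y) g
        \<longrightarrow> (\<exists>f. is_hom (tl_inf ta) (hd_inf ha v) X Y f \<and> forget_hom f = g))
     \<comment> \<open>essentially surjective\<close>
   \<and> (\<forall>Y. is_nearly ta ha lam v Y
        \<longrightarrow> (\<exists>X. C_obj ta ha lam v X \<and> rep_iso ta ha (forget X) Y))"
  using forget_is_nearly[of ta ha lam v] forget_is_hom[of ta ha v] forget_faithful[of ta ha lam v]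
    forget_full[of ta ha lam v] forget_essentially_surjective[of ta ha lam v]
  by blast

end
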